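(* Let $R$ be a Dedekind domain and $G\in R^{n\times n}$ with $GG^{T}=\ell^2\mathbf{1}$ for some nonzero $\ell\in R$, where $\mathbf{1}$ is the identity matrix. Let $\mathfrak{d}_1,\ldots,\mathfrak{d}_n$ be the Smith ideals of $G$. Then $\mathfrak{d}_i\mathfrak{d}_{n-i+1}=\ell^2R$ for every $i\leq n/2$.
   Context: The $i$th determinantal ideal $\mathfrak{D}_i\subseteq R$ of $G$ is the ideal generated by all $i\times i$ minors. The Smith ideals are defined by $\mathfrak{d}_1=\mathfrak{D}_1$ and, for $i>1$, $\mathfrak{d}_i$ is the unique ideal with $\mathfrak{d}_i\mathfrak{D}_{i-1}=\mathfrak{D}_i$ if $\mathfrak{D}_{i-1}\neq0$, and $\mathfrak{d}_i=0$ otherwise. *)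

theory Defs
  imports "HOL-Computational_Algebra.Polynomial" "HOL-Computational_Algebra.Fraction_Field"
          "Jordan_Normal_Form.Determinant" "Jordan_Normal_Form.DL_Submatrix"
begin

definition is_ideal :: "'a::comm_ring_1 set \<Rightarrow> bool" where
  "is_ideal I \<longleftrightarrow> 0 \<in> I \<and> (\<forall>x\<in>I. \<forall>y\<in>I. x + y \<in> I) \<and> (\<forall>r. \<forall>x\<in>I. r * x \<in> I)"

definition ideal_gen :: "'a::comm_ring_1 set \<Rightarrow> 'a set" where
  "ideal_gen S = {x. \<exists>F c. finite F \<and> F \<subseteq> S \<and> x = (\<Sum>s\<in>F. c s * s)}"

definition ideal_mult :: "'a::comm_ring_1 set \<Rightarrow> 'a set \<Rightarrow> 'a set" where
  "ideal_mult I J = ideal_gen {a * b | a b. a \<in> I \<and> b \<in> J}"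

definition principal_ideal :: "'a::comm_ring_1 \<Rightarrow> 'a set" where
  "principal_ideal a = {a * r | r. True}"

definition prime_ideal :: "'a::comm_ring_1 set \<Rightarrow> bool" where
  "prime_ideal P \<longleftrightarrow> is_ideal P \<and> P \<noteq> UNIV \<and> (\<forall>a b. a * b \<in> P \<longrightarrow> a \<in> P \<or> b \<in> P)"

definition maximal_ideal :: "'a::comm_ring_1 set \<Rightarrow> bool" where
  "maximal_ideal M \<longleftrightarrow> is_ideal M \<and> M \<noteq> UNIV \<and>
     (\<forall>J. is_ideal J \<and> M \<subseteq> J \<longrightarrow> J = M \<or> J = UNIV)"

definition noetherian_ring :: "'a::comm_ring_1 itself \<Rightarrow> bool" where
  "noetherian_ring _ \<longleftrightarrow> (\<forall>I::'a set. is_ideal I \<longrightarrow> (\<exists>S. finite S \<and> I = ideal_gen S))"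

definition integrally_closed :: "'a::idom itself \<Rightarrow> bool" where
  "integrally_closed _ \<longleftrightarrow>
     (\<forall>(x::'a fract) (p::'a poly). lead_coeff p = 1 \<and> poly (map_poly (\<lambda>a. Fract a 1) p) x = 0
        \<longrightarrow> (\<exists>a. x = Fract a 1))"

definition dim_le_one :: "'a::comm_ring_1 itself \<Rightarrow> bool" where
  "dim_le_one _ \<longleftrightarrow> (\<forall>P::'a set. prime_ideal P \<and> P \<noteq> {0} \<longrightarrow> maximal_ideal P)"

definition dedekind_domain :: "'a::idom itself \<Rightarrow> bool" where
  "dedekind_domain T \<longleftrightarrow> noetherian_ring T \<and> integrally_closed T \<and> dim_le_one T"

definition det_ideal :: "'a::comm_ring_1 mat \<Rightarrow> nat \<Rightarrow> 'a set" where
  "det_ideal G i = ideal_gen {det (submatrix G I J) | I J.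
      I \<subseteq> {..<dim_row G} \<and> J \<subseteq> {..<dim_col G} \<and> card I = i \<and> card J = i}"

definition smith_ideal :: "'a::comm_ring_1 mat \<Rightarrow> nat \<Rightarrow> 'a set" where
  "smith_ideal G i =
     (if i = 1 then det_ideal G 1
      else if det_ideal G (i - 1) \<noteq> {0}
        then (THE d. is_ideal d \<and> ideal_mult d (det_ideal G (i - 1)) = det_ideal G i)
      else {0})"

end

theory Submission
  imports Defs "Jordan_Normal_Form.Char_Poly"
begin

text \<open>
  Multiplying \<open>G\<close> by the matrix whose first \<open>k\<close> columns are the first \<open>k\<close> rows of \<open>G\<close> turns
  \<open>G G\<^sup>T = l\<^sup>2 1\<close> into a block triangular identity (Jacobi's theorem on complementary minors).
  Applied after reordering rows and columns, this shows that every \<open>(n-k)\<close>-minor of \<open>G\<close> is \<open>\<plusminus>l\<^sup>n\<^sup>-\<^sup>2\<^sup>k\<close> times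
  the complementary \<open>k\<close>-minor, hence \<open>D\<^sub>n\<^sub>-\<^sub>k = l\<^sup>n\<^sup>-\<^sup>2\<^sup>k D\<^sub>k\<close> for \<open>2k \<le> n\<close>.
  In a Dedekind domain every nonzero ideal is invertible, hence cancellable; all \<open>D\<^sub>k\<close> with
  \<open>k \<le> n\<close> contain \<open>det G \<noteq> 0\<close>, so \<open>d\<^sub>i D\<^sub>i\<^sub>-\<^sub>1 = D\<^sub>i\<close> for all \<open>i \<le> n\<close>. Substituting the relation between
  complementary determinantal ideals gives \<open>d\<^sub>i d\<^sub>n\<^sub>-\<^sub>i\<^sub>+\<^sub>1 D\<^sub>i\<^sub>-\<^sub>1 = l\<^sup>2 D\<^sub>i\<^sub>-\<^sub>1\<close>, and \<open>D\<^sub>i\<^sub>-\<^sub>1\<close> cancels.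
\<close>

section \<open>Ideal arithmetic\<close>

lemma is_ideal_0: "is_ideal I \<Longrightarrow> 0 \<in> I"
  by (simp add: is_ideal_def)

lemma is_ideal_add: "is_ideal I \<Longrightarrow> x \<in> I \<Longrightarrow> y \<in> I \<Longrightarrow> x + y \<in> I"
  by (simp add: is_ideal_def)

lemma is_ideal_mult_left: "is_ideal I \<Longrightarrow> x \<in> I \<Longrightarrow> r * x \<in> I"
  by (simp add: is_ideal_def)

lemma is_ideal_mult_right: "is_ideal I \<Longrightarrow> x \<in> I \<Longrightarrow> x * r \<in> I"
  by (metis is_ideal_mult_left mult.commute)

lemma is_ideal_uminus: "is_ideal I \<Longrightarrow> x \<in> I \<Longrightarrow> - x \<in> I"
  by (metis is_ideal_mult_left mult_minus1)

lemma is_ideal_sum: "is_ideal I \<Longrightarrow> (\<And>s. s \<in> F \<Longrightarrow> f s \<in> I) \<Longrightarrow> sum f F \<in> I"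
  by (induction F rule: infinite_finite_induct) (auto simp: is_ideal_0 is_ideal_add)

lemma is_ideal_UNIV: "is_ideal UNIV"
  by (simp add: is_ideal_def)

lemma is_ideal_singleton_zero: "is_ideal {0}"
  by (simp add: is_ideal_def)

lemma is_ideal_image_mult: "is_ideal I \<Longrightarrow> is_ideal ((*) a ` I)"
  unfolding is_ideal_def by (auto simp: image_iff; metis mult_zero_right distrib_left mult.left_commute)

lemma ideal_gen_superset: "S \<subseteq> ideal_gen S"
proof
  fix x assume "x \<in> S"
  then show "x \<in> ideal_gen S"
    unfolding ideal_gen_def by (intro CollectI exI[of _ "{x}"] exI[of _ "\<lambda>_. 1"]) auto
qed

lemma is_ideal_ideal_gen: "is_ideal (ideal_gen S)"
  unfolding is_ideal_def
proof (intro conjI ballI allI)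
  show "0 \<in> ideal_gen S"
    unfolding ideal_gen_def by (intro CollectI exI[of _ "{}"]) auto
next
  fix x y assume "x \<in> ideal_gen S" "y \<in> ideal_gen S"
  then obtain F c G d where F: "finite F" "F \<subseteq> S" "x = (\<Sum>s\<in>F. c s * s)"
    and G: "finite G" "G \<subseteq> S" "y = (\<Sum>s\<in>G. d s * s)"
    unfolding ideal_gen_def by auto
  define e where "e s = (if s \<in> F then c s else 0) + (if s \<in> G then d s else 0)" for s
  have "x = (\<Sum>s\<in>F \<union> G. (if s \<in> F then c s else 0) * s)"
    unfolding F(3) using F(1) G(1) by (intro sum.mono_neutral_cong_left) auto
  moreover have "y = (\<Sum>s\<in>F \<union> G. (if s \<in> G then d s else 0) * s)"
    unfolding G(3) using F(1) G(1) by (intro sum.mono_neutral_cong_left) auto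
  ultimately have "x + y = (\<Sum>s\<in>F \<union> G. e s * s)"
    by (simp add: e_def sum.distrib distrib_right)
  then show "x + y \<in> ideal_gen S"
    unfolding ideal_gen_def using F(1,2) G(1,2)
    by (intro CollectI exI[of _ "F \<union> G"] exI[of _ e]) auto
next
  fix r x assume "x \<in> ideal_gen S"
  then obtain F c where F: "finite F" "F \<subseteq> S" "x = (\<Sum>s\<in>F. c s * s)"
    unfolding ideal_gen_def by auto
  then have "r * x = (\<Sum>s\<in>F. (r * c s) * s)"
    by (simp add: sum_distrib_left mult.assoc)
  then show "r * x \<in> ideal_gen S"
    unfolding ideal_gen_def using F(1,2) by (intro CollectI exI[of _ F] exI[of _ "\<lambda>s. r * c s"]) auto
qed

lemma ideal_gen_least: "is_ideal I \<Longrightarrow> S \<subseteq> I \<Longrightarrow> ideal_gen S \<subseteq> I"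
  unfolding ideal_gen_def by (auto intro!: is_ideal_sum is_ideal_mult_left)

lemma ideal_gen_eq_0_iff: "ideal_gen S = {0} \<longleftrightarrow> S \<subseteq> {0}"
  using ideal_gen_least[OF is_ideal_singleton_zero, of S] ideal_gen_superset[of S]
    is_ideal_0[OF is_ideal_ideal_gen, of S] by blast

lemma ideal_gen_insert_psubset: "c \<notin> M \<Longrightarrow> M \<subset> ideal_gen (insert c M)"
  using ideal_gen_superset[of "insert c M"] by auto

lemma is_ideal_ideal_mult: "is_ideal (ideal_mult I J)"
  unfolding ideal_mult_def by (rule is_ideal_ideal_gen)

lemma ideal_mult_memI: "a \<in> I \<Longrightarrow> b \<in> J \<Longrightarrow> a * b \<in> ideal_mult I J"
  unfolding ideal_mult_def by (rule subsetD[OF ideal_gen_superset]) auto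

lemma ideal_mult_least:
  "is_ideal K \<Longrightarrow> (\<And>a b. a \<in> I \<Longrightarrow> b \<in> J \<Longrightarrow> a * b \<in> K) \<Longrightarrow> ideal_mult I J \<subseteq> K"
  unfolding ideal_mult_def by (rule ideal_gen_least) auto

lemma ideal_mult_commute: "ideal_mult I J = ideal_mult J I"
proof -
  have sub: "ideal_mult I J \<subseteq> ideal_mult J I" for I J :: "'a set"
  proof (rule ideal_mult_least[OF is_ideal_ideal_mult])
    fix a b assume "a \<in> I" "b \<in> J"
    then show "a * b \<in> ideal_mult J I"
      using ideal_mult_memI[of b J a I] by (simp add: mult.commute)
  qed
  show ?thesis
    using sub[of I J] sub[of J I] by (rule subset_antisym)
qed

lemma ideal_mult_mono: "I \<subseteq> I' \<Longrightarrow> J \<subseteq> J' \<Longrightarrow> ideal_mult I J \<subseteq> ideal_mult I' J'"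
  by (rule ideal_mult_least[OF is_ideal_ideal_mult]) (simp add: ideal_mult_memI subset_iff)

lemma ideal_mult_subset_left: "is_ideal I \<Longrightarrow> ideal_mult I J \<subseteq> I"
  by (rule ideal_mult_least) (simp_all add: is_ideal_mult_right)

lemma principal_ideal_eq_range: "principal_ideal a = range ((*) a)"
  unfolding principal_ideal_def by auto

lemma is_ideal_principal_ideal: "is_ideal (principal_ideal a)"
  unfolding principal_ideal_eq_range by (rule is_ideal_image_mult[OF is_ideal_UNIV])

lemma principal_ideal_self: "a \<in> principal_ideal a"
  unfolding principal_ideal_eq_range by (metis mult_1_right rangeI)

lemma principal_ideal_1: "principal_ideal 1 = UNIV"
  unfolding principal_ideal_eq_range by simp

lemma principal_ideal_subset_iff:
  assumes "is_ideal I"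
  shows "principal_ideal a \<subseteq> I \<longleftrightarrow> a \<in> I"
proof
  show "principal_ideal a \<subseteq> I \<Longrightarrow> a \<in> I"
    using principal_ideal_self by blast
  show "a \<in> I \<Longrightarrow> principal_ideal a \<subseteq> I"
    unfolding principal_ideal_eq_range using is_ideal_mult_right[OF assms] by auto
qed

lemma ideal_mult_principal_ideal:
  assumes "is_ideal I"
  shows "ideal_mult (principal_ideal a) I = (*) a ` I"
proof
  show "ideal_mult (principal_ideal a) I \<subseteq> (*) a ` I"
  proof (rule ideal_mult_least[OF is_ideal_image_mult[OF assms]])
    fix p x assume "p \<in> principal_ideal a" "x \<in> I"
    obtain r where p: "p = a * r"
      using \<open>p \<in> principal_ideal a\<close> unfolding principal_ideal_def by blast
    have "p * x = a * (r * x)"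
      unfolding p by (rule mult.assoc)
    moreover have "r * x \<in> I"
      using is_ideal_mult_left[OF assms \<open>x \<in> I\<close>] .
    ultimately show "p * x \<in> (*) a ` I"
      by (rule image_eqI)
  qed
  show "(*) a ` I \<subseteq> ideal_mult (principal_ideal a) I"
  proof
    fix y assume "y \<in> (*) a ` I"
    then obtain x where y: "y = a * x" and "x \<in> I"
      by (rule imageE)
    show "y \<in> ideal_mult (principal_ideal a) I"
      unfolding y by (rule ideal_mult_memI[OF principal_ideal_self \<open>x \<in> I\<close>])
  qed
qed

lemma ideal_mult_UNIV_left: "is_ideal I \<Longrightarrow> ideal_mult UNIV I = I"
  using ideal_mult_principal_ideal[of I 1] by (simp add: principal_ideal_1 image_ident)

lemma image_mult_principal_ideal: "(*) a ` principal_ideal b = principal_ideal (a * b)"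
  unfolding principal_ideal_eq_range image_image by (simp add: mult.assoc)

definition ideal_quot :: "'a::comm_ring_1 set \<Rightarrow> 'a set \<Rightarrow> 'a set" where
  "ideal_quot K J = {x. \<forall>y\<in>J. x * y \<in> K}"

lemma is_ideal_ideal_quot: "is_ideal K \<Longrightarrow> is_ideal (ideal_quot K J)"
  unfolding ideal_quot_def is_ideal_def by (simp add: distrib_right mult.assoc)

lemma ideal_mult_ideal_quot_subset: "is_ideal K \<Longrightarrow> ideal_mult (ideal_quot K J) J \<subseteq> K"
  unfolding ideal_quot_def by (rule ideal_mult_least) simp_all

lemma ideal_quot_singleton: "ideal_quot K {c} = {x. c * x \<in> K}"
  unfolding ideal_quot_def by (simp add: mult.commute)

lemma image_mult_ideal_quot_singleton:
  assumes "K \<subseteq> principal_ideal c"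
  shows "(*) c ` ideal_quot K {c} = K"
proof
  show "(*) c ` ideal_quot K {c} \<subseteq> K"
    unfolding ideal_quot_singleton by auto
  show "K \<subseteq> (*) c ` ideal_quot K {c}"
  proof
    fix y assume "y \<in> K"
    moreover obtain r where "y = c * r"
      using assms \<open>y \<in> K\<close> unfolding principal_ideal_def by blast
    ultimately show "y \<in> (*) c ` ideal_quot K {c}"
      unfolding ideal_quot_singleton by simp
  qed
qed

lemma ideal_mult_assoc: "ideal_mult (ideal_mult I J) K = ideal_mult I (ideal_mult J K)"
proof -
  have left_to_right: "ideal_mult (ideal_mult I J) K \<subseteq> ideal_mult I (ideal_mult J K)" for I J K :: "'a set"
  proof (rule ideal_mult_least[OF is_ideal_ideal_mult])
    fix x c assume x: "x \<in> ideal_mult I J" and c: "c \<in> K"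
    have "ideal_mult I J \<subseteq> ideal_quot (ideal_mult I (ideal_mult J K)) {c}"
    proof (rule ideal_mult_least[OF is_ideal_ideal_quot[OF is_ideal_ideal_mult]])
      fix a b assume "a \<in> I" "b \<in> J"
      then have "a * (b * c) \<in> ideal_mult I (ideal_mult J K)"
        using c by (intro ideal_mult_memI)
      then show "a * b \<in> ideal_quot (ideal_mult I (ideal_mult J K)) {c}"
        unfolding ideal_quot_def by (simp add: mult.assoc)
    qed
    then show "x * c \<in> ideal_mult I (ideal_mult J K)"
      using x unfolding ideal_quot_def by blast
  qed
  have "ideal_mult I (ideal_mult J K) = ideal_mult (ideal_mult K J) I"
    by (simp only: ideal_mult_commute)
  also have "\<dots> \<subseteq> ideal_mult K (ideal_mult J I)"
    by (rule left_to_right)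
  also have "\<dots> = ideal_mult (ideal_mult I J) K"
    by (simp only: ideal_mult_commute)
  finally show ?thesis
    by (rule subset_antisym[OF left_to_right])
qed

lemma ideal_mult_left_commute: "ideal_mult I (ideal_mult J K) = ideal_mult J (ideal_mult I K)"
  by (simp only: ideal_mult_assoc[symmetric] ideal_mult_commute[of I J])

lemma ideal_mult_image_mult:
  assumes "is_ideal I"
  shows "ideal_mult ((*) a ` I) J = (*) a ` ideal_mult I J"
proof -
  have "ideal_mult ((*) a ` I) J = ideal_mult (ideal_mult (principal_ideal a) I) J"
    by (simp only: ideal_mult_principal_ideal[OF assms])
  also have "\<dots> = ideal_mult (principal_ideal a) (ideal_mult I J)"
    by (rule ideal_mult_assoc)
  also have "\<dots> = (*) a ` ideal_mult I J"
    by (rule ideal_mult_principal_ideal[OF is_ideal_ideal_mult])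
  finally show ?thesis .
qed

lemma ideal_mult_swap: "ideal_mult (ideal_mult A I) J = ideal_mult (ideal_mult I J) A"
  by (rule trans[OF ideal_mult_assoc ideal_mult_commute])

text \<open>Invertibility as a fractional ideal, stated without fractions: \<open>c\<^sup>-\<^sup>1 J\<close> is the inverse of \<open>I\<close>.\<close>

definition invertible_ideal :: "'a::comm_ring_1 set \<Rightarrow> bool" where
  "invertible_ideal I \<longleftrightarrow> (\<exists>J c. is_ideal J \<and> c \<noteq> 0 \<and> ideal_mult I J = principal_ideal c)"

lemma invertible_ideal_UNIV: "invertible_ideal UNIV"
  unfolding invertible_ideal_def
  by (intro exI[of _ UNIV] exI[of _ 1]) (simp add: is_ideal_UNIV ideal_mult_UNIV_left principal_ideal_1)

lemma invertible_ideal_cancel: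
  fixes I :: "'a::idom set"
  assumes "invertible_ideal I" "is_ideal A" "is_ideal B" "ideal_mult A I = ideal_mult B I"
  shows "A = B"
proof -
  obtain J c where J: "is_ideal J" "c \<noteq> 0" "ideal_mult I J = principal_ideal c"
    using assms(1) unfolding invertible_ideal_def by auto
  have scale: "(*) c ` X = ideal_mult (ideal_mult X I) J" if "is_ideal X" for X
  proof -
    have "(*) c ` X = ideal_mult (ideal_mult I J) X"
      unfolding J(3) by (rule ideal_mult_principal_ideal[OF that, symmetric])
    also have "\<dots> = ideal_mult (ideal_mult X I) J"
      by (rule ideal_mult_swap[symmetric])
    finally show ?thesis .
  qed
  have "(*) c ` A = (*) c ` B"
    unfolding scale[OF assms(2)] scale[OF assms(3)] assms(4) ..
  then show ?thesis
    using J(2) by (simp add: inj_image_eq_iff)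
qed

lemma invertible_ideal_dvd:
  fixes I :: "'a::idom set"
  assumes "invertible_ideal I" "is_ideal I" "is_ideal B" "B \<subseteq> I"
  obtains D where "is_ideal D" "ideal_mult D I = B"
proof -
  obtain J c where J: "is_ideal J" "c \<noteq> 0" "ideal_mult I J = principal_ideal c"
    using assms(1) unfolding invertible_ideal_def by auto
  define D where "D = ideal_quot (ideal_mult B J) {c}"
  have D: "is_ideal D"
    unfolding D_def by (intro is_ideal_ideal_quot is_ideal_ideal_mult)
  have "ideal_mult B J \<subseteq> principal_ideal c"
    using ideal_mult_mono[OF assms(4) order_refl, of J] J(3) by simp
  then have "(*) c ` D = ideal_mult B J"
    unfolding D_def by (rule image_mult_ideal_quot_singleton)
  then have "(*) c ` ideal_mult D I = ideal_mult (ideal_mult B J) I"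
    using ideal_mult_image_mult[OF D, of c I] by simp
  also have "\<dots> = ideal_mult (ideal_mult I J) B"
    unfolding ideal_mult_commute[of I J] by (rule ideal_mult_swap)
  also have "\<dots> = (*) c ` B"
    unfolding J(3) by (rule ideal_mult_principal_ideal[OF assms(3)])
  finally show ?thesis
    using that D J(2) by (simp add: inj_image_eq_iff)
qed

section \<open>Nonzero ideals of a Dedekind domain are invertible\<close>

lemma is_ideal_Union_chain:
  assumes chain: "subset.chain {I. is_ideal I} C" and "C \<noteq> {}"
  shows "is_ideal (\<Union>C)"
proof -
  have ideal: "is_ideal I" if "I \<in> C" for I
    using chain that unfolding subset_chain_def by blast
  show ?thesis
    unfolding is_ideal_def
  proof (intro conjI ballI allI)
    obtain I where "I \<in> C"
      using \<open>C \<noteq> {}\<close> by blast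
    then show "0 \<in> \<Union>C"
      using is_ideal_0[OF ideal] by blast
  next
    fix x y assume "x \<in> \<Union>C" "y \<in> \<Union>C"
    then obtain I J where IJ: "I \<in> C" "J \<in> C" "x \<in> I" "y \<in> J"
      by blast
    have "I \<subseteq> J \<or> J \<subseteq> I"
      using chain IJ(1,2) unfolding subset_chain_def by blast
    then obtain K where "K \<in> C" "x \<in> K" "y \<in> K"
      using IJ by blast
    then show "x + y \<in> \<Union>C"
      using is_ideal_add[OF ideal] by blast
  next
    fix r x assume "x \<in> \<Union>C"
    then obtain I where "I \<in> C" "x \<in> I"
      by blast
    then show "r * x \<in> \<Union>C"
      using is_ideal_mult_left[OF ideal] by blast
  qed
qed

lemma noetherian_Union_chain_mem:
  fixes C :: "'a::comm_ring_1 set set"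
  assumes noeth: "noetherian_ring TYPE('a)"
    and chain: "subset.chain {I. is_ideal I} C" and "C \<noteq> {}"
  shows "\<Union>C \<in> C"
proof -
  obtain S where S: "finite S" "\<Union>C = ideal_gen S"
    using noeth is_ideal_Union_chain[OF chain \<open>C \<noteq> {}\<close>] unfolding noetherian_ring_def by blast
  have "S \<subseteq> \<Union>C"
    unfolding S(2) by (rule ideal_gen_superset)
  then obtain B where B: "B \<in> C" "S \<subseteq> B"
    by (rule finite_subset_Union_chain[OF S(1) _ \<open>C \<noteq> {}\<close> chain])
  have "is_ideal B"
    using chain B(1) unfolding subset_chain_def by blast
  then have "\<Union>C \<subseteq> B"
    unfolding S(2) using B(2) by (rule ideal_gen_least)
  then have "\<Union>C = B"
    using B(1) by (intro subset_antisym Union_upper)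
  then show ?thesis
    using B(1) by simp
qed

lemma noetherian_maximal_element:
  fixes \<Phi> :: "'a::comm_ring_1 set set"
  assumes noeth: "noetherian_ring TYPE('a)" and "I0 \<in> \<Phi>" and ideals: "\<And>I. I \<in> \<Phi> \<Longrightarrow> is_ideal I"
  shows "\<exists>M\<in>\<Phi>. \<forall>I\<in>\<Phi>. M \<subseteq> I \<longrightarrow> I = M"
proof (rule subset_Zorn_nonempty)
  show "\<Phi> \<noteq> {}"
    using \<open>I0 \<in> \<Phi>\<close> by blast
next
  fix C assume "C \<noteq> {}" and chain: "subset.chain \<Phi> C"
  then have "subset.chain {I. is_ideal I} C"
    using ideals unfolding subset_chain_def by blast
  then have "\<Union>C \<in> C"
    using noetherian_Union_chain_mem[OF noeth] \<open>C \<noteq> {}\<close> by blast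
  then show "\<Union>C \<in> \<Phi>"
    using chain unfolding subset_chain_def by blast
qed

lemma noetherian_ideal_induct [consumes 2, case_names step]:
  fixes I :: "'a::comm_ring_1 set"
  assumes noeth: "noetherian_ring TYPE('a)" and "is_ideal I"
    and step: "\<And>M. is_ideal M \<Longrightarrow> (\<And>J. is_ideal J \<Longrightarrow> M \<subset> J \<Longrightarrow> P J) \<Longrightarrow> P M"
  shows "P I"
proof (rule ccontr)
  assume "\<not> P I"
  define \<Phi> where "\<Phi> = {J. is_ideal J \<and> \<not> P J}"
  have "I \<in> \<Phi>"
    using \<open>is_ideal I\<close> \<open>\<not> P I\<close> unfolding \<Phi>_def by simp
  moreover have "is_ideal J" if "J \<in> \<Phi>" for J
    using that unfolding \<Phi>_def by simp
  ultimately obtain M where M: "M \<in> \<Phi>" and Mmax: "\<forall>J\<in>\<Phi>. M \<subseteq> J \<longrightarrow> J = M"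
    using noetherian_maximal_element[OF noeth] by metis
  have "P M"
  proof (rule step)
    show "is_ideal M"
      using M unfolding \<Phi>_def by simp
    fix J assume "is_ideal J" "M \<subset> J"
    show "P J"
    proof (rule ccontr)
      assume "\<not> P J"
      then have "J \<in> \<Phi>"
        using \<open>is_ideal J\<close> unfolding \<Phi>_def by simp
      then show False
        using Mmax \<open>M \<subset> J\<close> by blast
    qed
  qed
  then show False
    using M unfolding \<Phi>_def by simp
qed

lemma noetherian_exists_maximal_ideal:
  fixes I :: "'a::comm_ring_1 set"
  assumes noeth: "noetherian_ring TYPE('a)" and "is_ideal I" "I \<noteq> UNIV"
  obtains P where "maximal_ideal P" "I \<subseteq> P"
proof -
  have "\<exists>P. maximal_ideal P \<and> I \<subseteq> P"
    using noeth \<open>is_ideal I\<close> \<open>I \<noteq> UNIV\<close>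
  proof (induction I rule: noetherian_ideal_induct)
    case (step M)
    show ?case
    proof (cases "maximal_ideal M")
      case False
      then obtain J where "is_ideal J" "M \<subseteq> J" "J \<noteq> M" "J \<noteq> UNIV"
        using step.hyps step.prems unfolding maximal_ideal_def by blast
      then show ?thesis
        using step.IH[of J] by blast
    qed blast
  qed
  then show ?thesis
    using that by blast
qed

lemma maximal_ideal_eq: "maximal_ideal Q \<Longrightarrow> is_ideal P \<Longrightarrow> Q \<subseteq> P \<Longrightarrow> P \<noteq> UNIV \<Longrightarrow> P = Q"
  unfolding maximal_ideal_def by blast

lemma maximal_ideal_imp_prime_ideal:
  assumes P: "maximal_ideal P"
  shows "prime_ideal P"
proof -
  have ideal: "is_ideal P" and proper: "P \<noteq> UNIV"
    using P unfolding maximal_ideal_def by auto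
  have "y \<in> P" if xy: "x * y \<in> P" and "x \<notin> P" for x y
  proof -
    have "insert x P \<subseteq> ideal_quot P {y}"
      using xy is_ideal_mult_right[OF ideal] unfolding ideal_quot_def by auto
    then have sub: "ideal_gen (insert x P) \<subseteq> ideal_quot P {y}"
      by (rule ideal_gen_least[OF is_ideal_ideal_quot[OF ideal]])
    have "P \<subseteq> ideal_gen (insert x P)" "x \<in> ideal_gen (insert x P)"
      using ideal_gen_superset[of "insert x P"] by auto
    then have "ideal_gen (insert x P) = UNIV"
      using maximal_ideal_eq[OF P is_ideal_ideal_gen] \<open>x \<notin> P\<close> by blast
    then have "1 * y \<in> P"
      using sub unfolding ideal_quot_def by blast
    then show "y \<in> P"
      by simp
  qed
  then show ?thesis
    unfolding prime_ideal_def using ideal proper by blast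
qed

lemma prime_ideal_mult_subset:
  assumes "prime_ideal P" "ideal_mult I J \<subseteq> P"
  shows "I \<subseteq> P \<or> J \<subseteq> P"
proof (rule ccontr)
  assume "\<not> ?thesis"
  then obtain a b where "a \<in> I" "a \<notin> P" "b \<in> J" "b \<notin> P"
    by blast
  moreover have "a * b \<in> P"
    using assms(2) ideal_mult_memI[OF \<open>a \<in> I\<close> \<open>b \<in> J\<close>] by blast
  ultimately show False
    using assms(1) unfolding prime_ideal_def by blast
qed

fun ideal_prod :: "'a::comm_ring_1 set list \<Rightarrow> 'a set" where
  "ideal_prod [] = UNIV"
| "ideal_prod (P # Ps) = ideal_mult P (ideal_prod Ps)"

lemma is_ideal_ideal_prod: "is_ideal (ideal_prod Ps)"
  by (cases Ps) (simp_all add: is_ideal_UNIV is_ideal_ideal_mult)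

lemma ideal_prod_append: "ideal_prod (xs @ ys) = ideal_mult (ideal_prod xs) (ideal_prod ys)"
  by (induction xs) (simp_all add: ideal_mult_UNIV_left[OF is_ideal_ideal_prod] ideal_mult_assoc)

lemma ideal_prod_middle: "ideal_prod (xs @ Q # ys) = ideal_mult Q (ideal_prod (xs @ ys))"
  by (simp add: ideal_prod_append ideal_mult_left_commute)

lemma prime_ideal_ideal_prod_subset:
  assumes "prime_ideal P" "ideal_prod Ps \<subseteq> P"
  shows "\<exists>Q\<in>set Ps. Q \<subseteq> P"
  using assms(2)
proof (induction Ps)
  case Nil
  then show ?case
    using assms(1) unfolding prime_ideal_def by auto
next
  case (Cons Q Ps)
  then have "Q \<subseteq> P \<or> ideal_prod Ps \<subseteq> P"
    using prime_ideal_mult_subset[OF assms(1)] by simp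
  then show ?case
    using Cons.IH by auto
qed

lemma ideal_mult_ideal_gen_insert_subset:
  assumes M: "is_ideal M" and ab: "a * b \<in> M"
  shows "ideal_mult (ideal_gen (insert a M)) (ideal_gen (insert b M)) \<subseteq> M"
proof -
  have "insert b M \<subseteq> ideal_quot M {a}"
    using ab is_ideal_mult_right[OF M] unfolding ideal_quot_def by (auto simp: mult.commute)
  then have "ideal_gen (insert b M) \<subseteq> ideal_quot M {a}"
    by (rule ideal_gen_least[OF is_ideal_ideal_quot[OF M]])
  then have "insert a M \<subseteq> ideal_quot M (ideal_gen (insert b M))"
    using is_ideal_mult_right[OF M] unfolding ideal_quot_def by (auto simp: mult.commute)
  then have "ideal_gen (insert a M) \<subseteq> ideal_quot M (ideal_gen (insert b M))"
    by (rule ideal_gen_least[OF is_ideal_ideal_quot[OF M]])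
  then show ?thesis
    using ideal_mult_ideal_quot_subset[OF M] by (rule subset_trans[OF ideal_mult_mono[OF _ order_refl]])
qed

definition nonzero_primes :: "'a::comm_ring_1 set list \<Rightarrow> bool" where
  "nonzero_primes Ps \<longleftrightarrow> (\<forall>P\<in>set Ps. prime_ideal P \<and> P \<noteq> {0})"

lemma noetherian_contains_prime_product:
  fixes I :: "'a::comm_ring_1 set"
  assumes noeth: "noetherian_ring TYPE('a)" and "is_ideal I" "I \<noteq> {0}"
  obtains Ps where "nonzero_primes Ps" "ideal_prod Ps \<subseteq> I"
proof -
  have "\<exists>Ps. nonzero_primes Ps \<and> ideal_prod Ps \<subseteq> I"
    using noeth \<open>is_ideal I\<close> \<open>I \<noteq> {0}\<close>
  proof (induction I rule: noetherian_ideal_induct)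
    case (step M)
    consider "M = UNIV" | "prime_ideal M" | a b where "a * b \<in> M" "a \<notin> M" "b \<notin> M"
      using step.hyps unfolding prime_ideal_def by blast
    then show ?case
    proof cases
      case 1
      then show ?thesis
        by (intro exI[of _ "[]"]) (simp add: nonzero_primes_def)
    next
      case 2
      then show ?thesis
        using step.prems ideal_mult_subset_left[OF step.hyps]
        by (intro exI[of _ "[M]"]) (simp add: nonzero_primes_def)
    next
      case (3 a b)
      have "ideal_gen (insert c M) \<noteq> {0}" if "c \<notin> M" for c
        using that is_ideal_0[OF step.hyps] ideal_gen_superset[of "insert c M"] by auto
      then obtain Pa Pb where Pa: "nonzero_primes Pa" "ideal_prod Pa \<subseteq> ideal_gen (insert a M)"
        and Pb: "nonzero_primes Pb" "ideal_prod Pb \<subseteq> ideal_gen (insert b M)"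
        using step.IH[OF is_ideal_ideal_gen ideal_gen_insert_psubset] 3(2,3) by meson
      have "ideal_prod (Pa @ Pb) \<subseteq> M"
        unfolding ideal_prod_append using ideal_mult_mono[OF Pa(2) Pb(2)]
          ideal_mult_ideal_gen_insert_subset[OF step.hyps 3(1)] by (rule subset_trans)
      then show ?thesis
        using Pa(1) Pb(1) by (intro exI[of _ "Pa @ Pb"]) (auto simp: nonzero_primes_def)
    qed
  qed
  then show ?thesis
    using that by blast
qed

lemma integrally_closed_eigenvalue:
  fixes C :: "'a::idom mat"
  assumes IC: "integrally_closed TYPE('a)" and C: "C \<in> carrier_mat m m"
    and ev: "eigenvalue (map_mat to_fract C) x"
  shows "x \<in> range to_fract"
proof -
  interpret h: inj_comm_ring_hom to_fract
    by (unfold_locales, auto)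
  have "poly (char_poly (map_mat to_fract C)) x = 0"
    using ev eigenvalue_root_char_poly[of "map_mat to_fract C" m] C by simp
  then have "poly (map_poly (\<lambda>a. Fract a 1) (char_poly C)) x = 0"
    unfolding h.char_poly_hom[OF C] by (simp add: to_fract_def[abs_def])
  moreover have "lead_coeff (char_poly C) = 1"
    using degree_monic_char_poly[OF C] by simp
  ultimately obtain r where "x = Fract r 1"
    using IC unfolding integrally_closed_def by blast
  then show ?thesis
    by (simp add: to_fract_def)
qed

lemma coeff_mat_mult_vec_to_fract:
  fixes a b :: "'a::idom"
  assumes "a \<noteq> 0"
    and C: "\<And>i. i < length ss \<Longrightarrow> b * ss ! i = a * (\<Sum>j<length ss. C i j * ss ! j)"
  defines "m \<equiv> length ss"
  shows "map_mat to_fract (mat m m (\<lambda>(i, j). C i j)) *\<^sub>v vec m (\<lambda>j. to_fract (ss ! j))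
    = Fract b a \<cdot>\<^sub>v vec m (\<lambda>j. to_fract (ss ! j))"
proof (rule eq_vecI)
  fix i assume "i < dim_vec (Fract b a \<cdot>\<^sub>v vec m (\<lambda>j. to_fract (ss ! j)))"
  then have i: "i < m"
    by simp
  have "(map_mat to_fract (mat m m (\<lambda>(i, j). C i j)) *\<^sub>v vec m (\<lambda>j. to_fract (ss ! j))) $ i
      = (\<Sum>j<m. to_fract (C i j) * to_fract (ss ! j))"
    using i by (simp add: scalar_prod_def atLeast0LessThan)
  also have "\<dots> = to_fract (\<Sum>j<m. C i j * ss ! j)"
    by (simp add: to_fract_sum to_fract_mult)
  also have "\<dots> = Fract (a * (\<Sum>j<m. C i j * ss ! j)) a"
    using \<open>a \<noteq> 0\<close> by (simp add: to_fract_def eq_fract)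
  also have "\<dots> = Fract b a * to_fract (ss ! i)"
    using C[of i] i unfolding m_def by (simp add: to_fract_def)
  finally show "(map_mat to_fract (mat m m (\<lambda>(i, j). C i j)) *\<^sub>v vec m (\<lambda>j. to_fract (ss ! j))) $ i
      = (Fract b a \<cdot>\<^sub>v vec m (\<lambda>j. to_fract (ss ! j))) $ i"
    using i by simp
qed simp

text \<open>The determinant trick: the relations make \<open>ss\<close> an eigenvector of \<open>C\<close> with eigenvalue \<open>b / a\<close>,
  which is therefore a root of the monic characteristic polynomial of \<open>C\<close>.\<close>

lemma integrally_closed_mem_principal_idealI:
  fixes a b :: "'a::idom"
  assumes IC: "integrally_closed TYPE('a)" and "a \<noteq> 0" and "s0 \<in> set ss" "s0 \<noteq> 0"
    and C: "\<And>i. i < length ss \<Longrightarrow> b * ss ! i = a * (\<Sum>j<length ss. C i j * ss ! j)"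
  shows "b \<in> principal_ideal a"
proof -
  define m where "m = length ss"
  define Cm where "Cm = mat m m (\<lambda>(i, j). C i j)"
  define v where "v = vec m (\<lambda>j. to_fract (ss ! j))"
  have Cm: "Cm \<in> carrier_mat m m"
    unfolding Cm_def by simp
  obtain j where "j < m" "ss ! j = s0"
    using \<open>s0 \<in> set ss\<close> unfolding m_def by (auto simp: in_set_conv_nth)
  then have "v \<noteq> 0\<^sub>v m"
    using \<open>s0 \<noteq> 0\<close> unfolding v_def by (metis index_vec index_zero_vec(1) to_fract_eq_0_iff)
  moreover have "map_mat to_fract Cm *\<^sub>v v = Fract b a \<cdot>\<^sub>v v"
    unfolding Cm_def v_def m_def by (rule coeff_mat_mult_vec_to_fract[OF \<open>a \<noteq> 0\<close> C])
  ultimately have "eigenvector (map_mat to_fract Cm) v (Fract b a)"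
    unfolding eigenvector_def using Cm by (simp add: v_def)
  then have "eigenvalue (map_mat to_fract Cm) (Fract b a)"
    unfolding eigenvalue_def by blast
  then obtain r where "Fract b a = to_fract r"
    using integrally_closed_eigenvalue[OF IC Cm] by blast
  then have "b = a * r"
    using \<open>a \<noteq> 0\<close> by (simp add: to_fract_def eq_fract mult.commute)
  then show ?thesis
    unfolding principal_ideal_def by blast
qed

lemma ideal_gen_set_obtain_coeffs:
  fixes ss :: "'a::comm_ring_1 list"
  assumes "distinct ss" and "y \<in> ideal_gen (set ss)"
  obtains c where "y = (\<Sum>j<length ss. c j * ss ! j)"
proof -
  obtain F c0 where F: "finite F" "F \<subseteq> set ss" "y = (\<Sum>s\<in>F. c0 s * s)"
    using assms(2) unfolding ideal_gen_def by blast
  define c where "c j = (if ss ! j \<in> F then c0 (ss ! j) else 0)" for j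
  have "(\<Sum>j<length ss. c j * ss ! j) = (\<Sum>s\<in>(!) ss ` {..<length ss}. (if s \<in> F then c0 s else 0) * s)"
    by (subst sum.reindex) (auto simp: c_def intro!: inj_on_nth assms(1))
  also have "\<dots> = (\<Sum>s\<in>set ss. (if s \<in> F then c0 s else 0) * s)"
    by (simp add: lessThan_atLeast0 nth_image)
  also have "\<dots> = y"
    unfolding F(3) by (rule sum.mono_neutral_cong_right) (use F(2) in auto)
  finally show ?thesis
    using that by metis
qed

lemma integrally_closed_mem_principal_ideal:
  fixes a b :: "'a::idom"
  assumes noeth: "noetherian_ring TYPE('a)" and IC: "integrally_closed TYPE('a)" and "a \<noteq> 0"
    and M: "is_ideal M" "M \<noteq> {0}" and sub: "\<And>m. m \<in> M \<Longrightarrow> b * m \<in> (*) a ` M"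
  shows "b \<in> principal_ideal a"
proof -
  obtain S where "finite S" and S: "M = ideal_gen S"
    using noeth M(1) unfolding noetherian_ring_def by blast
  obtain ss where ss: "set ss = S" "distinct ss"
    using finite_distinct_list[OF \<open>finite S\<close>] by blast
  obtain s0 where "s0 \<in> set ss" "s0 \<noteq> 0"
    using M(2) ss(1) unfolding S ideal_gen_eq_0_iff by blast
  have "\<exists>c. b * ss ! i = a * (\<Sum>j<length ss. c j * ss ! j)" if "i < length ss" for i
  proof -
    have "ss ! i \<in> M"
      using nth_mem[OF that] ideal_gen_superset ss(1) unfolding S by blast
    then obtain y where "y \<in> ideal_gen (set ss)" "b * ss ! i = a * y"
      using sub ss(1) unfolding S by blast
    moreover obtain c where "y = (\<Sum>j<length ss. c j * ss ! j)"
      using ideal_gen_set_obtain_coeffs[OF ss(2) \<open>y \<in> ideal_gen (set ss)\<close>] .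
    ultimately show ?thesis
      by blast
  qed
  then obtain C where "\<And>i. i < length ss \<Longrightarrow> b * ss ! i = a * (\<Sum>j<length ss. C i j * ss ! j)"
    by metis
  then show ?thesis
    by (rule integrally_closed_mem_principal_idealI[OF IC \<open>a \<noteq> 0\<close> \<open>s0 \<in> set ss\<close> \<open>s0 \<noteq> 0\<close>])
qed

lemma prime_product_subset_maximal_ideal:
  fixes P :: "'a::comm_ring_1 set"
  assumes dim: "dim_le_one TYPE('a)" and P: "maximal_ideal P"
    and Ps: "nonzero_primes Ps" "ideal_prod Ps \<subseteq> P"
  obtains xs ys where "Ps = xs @ P # ys"
proof -
  have ideal: "is_ideal P" and proper: "P \<noteq> UNIV"
    using P unfolding maximal_ideal_def by auto
  obtain Q where Q: "Q \<in> set Ps" "Q \<subseteq> P"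
    using prime_ideal_ideal_prod_subset[OF maximal_ideal_imp_prime_ideal[OF P] Ps(2)] by blast
  have "maximal_ideal Q"
    using dim Ps(1) Q(1) unfolding dim_le_one_def nonzero_primes_def by blast
  then have "P = Q"
    using maximal_ideal_eq[OF _ ideal Q(2) proper] by simp
  then show ?thesis
    using that split_list[OF Q(1)] by blast
qed

lemma principal_ideal_psubset_ideal_quot:
  fixes P :: "'a::idom set"
  assumes noeth: "noetherian_ring TYPE('a)" and dim: "dim_le_one TYPE('a)"
    and P: "maximal_ideal P" and "a \<in> P" "a \<noteq> 0"
  obtains b where "b \<in> ideal_quot (principal_ideal a) P" "b \<notin> principal_ideal a"
proof -
  have "principal_ideal a \<noteq> {0}"
    using principal_ideal_self[of a] \<open>a \<noteq> 0\<close> by auto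
  then obtain Ps0 where "nonzero_primes Ps0 \<and> ideal_prod Ps0 \<subseteq> principal_ideal a"
    using noetherian_contains_prime_product[OF noeth is_ideal_principal_ideal] by blast
  then obtain Ps where Ps: "nonzero_primes Ps" "ideal_prod Ps \<subseteq> principal_ideal a"
    and shortest: "\<And>Qs. nonzero_primes Qs \<and> ideal_prod Qs \<subseteq> principal_ideal a \<Longrightarrow> length Ps \<le> length Qs"
    using ex_has_least_nat[of "\<lambda>Qs. nonzero_primes Qs \<and> ideal_prod Qs \<subseteq> principal_ideal a" Ps0 length]
    by blast
  have "principal_ideal a \<subseteq> P"
    using P principal_ideal_subset_iff \<open>a \<in> P\<close> unfolding maximal_ideal_def by blast
  then obtain xs ys where Ps_split: "Ps = xs @ P # ys"
    using prime_product_subset_maximal_ideal[OF dim P Ps(1)] Ps(2) by blast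
  \<comment> \<open>Removing the factor \<open>P\<close> from a shortest product yields the element \<open>b\<close>.\<close>
  have "nonzero_primes (xs @ ys)"
    using Ps(1) unfolding Ps_split nonzero_primes_def by auto
  then have "\<not> ideal_prod (xs @ ys) \<subseteq> principal_ideal a"
    using shortest[of "xs @ ys"] unfolding Ps_split by auto
  then obtain b where b: "b \<in> ideal_prod (xs @ ys)" "b \<notin> principal_ideal a"
    by blast
  have "b * p \<in> principal_ideal a" if "p \<in> P" for p
  proof -
    have "p * b \<in> ideal_prod Ps"
      unfolding Ps_split ideal_prod_middle using that b(1) by (rule ideal_mult_memI)
    then show ?thesis
      using Ps(2) by (auto simp: mult.commute)
  qed
  then show ?thesis
    using that b(2) unfolding ideal_quot_def by blast
qed

lemma dedekind_psubset_ideal_quot: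
  fixes M P :: "'a::idom set"
  assumes ded: "dedekind_domain TYPE('a)" and P: "maximal_ideal P"
    and M: "is_ideal M" "M \<subseteq> P" and a: "a \<in> M" "a \<noteq> 0"
  defines "J \<equiv> ideal_quot (principal_ideal a) P"
  shows "M \<subset> ideal_quot (ideal_mult M J) {a}"
    and "(*) a ` ideal_quot (ideal_mult M J) {a} = ideal_mult M J"
proof -
  have noeth: "noetherian_ring TYPE('a)" and IC: "integrally_closed TYPE('a)"
    and dim: "dim_le_one TYPE('a)"
    using ded unfolding dedekind_domain_def by auto
  define N where "N = ideal_quot (ideal_mult M J) {a}"
  have "ideal_mult M J \<subseteq> ideal_mult P J"
    by (rule ideal_mult_mono[OF M(2) order_refl])
  also have "\<dots> \<subseteq> principal_ideal a"
    unfolding J_def ideal_mult_commute[of P] by (rule ideal_mult_ideal_quot_subset[OF is_ideal_principal_ideal])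
  finally have aN: "(*) a ` N = ideal_mult M J"
    unfolding N_def by (rule image_mult_ideal_quot_singleton)
  then show "(*) a ` ideal_quot (ideal_mult M J) {a} = ideal_mult M J"
    unfolding N_def .
  have "a \<in> J"
    unfolding J_def ideal_quot_def principal_ideal_def by auto
  then have "M \<subseteq> N"
    unfolding N_def ideal_quot_singleton using ideal_mult_memI[of _ M a J] by (auto simp: mult.commute)
  moreover have "N \<noteq> M"
  proof
    assume "N = M"
    obtain b where b: "b \<in> J" "b \<notin> principal_ideal a"
      using principal_ideal_psubset_ideal_quot[OF noeth dim P] a M(2) unfolding J_def by blast
    \<comment> \<open>Then \<open>b M \<subseteq> a M\<close>, so \<open>b / a\<close> is integral.\<close>
    have "b * m \<in> (*) a ` M" if "m \<in> M" for m
      using ideal_mult_memI[OF that b(1)] aN \<open>N = M\<close> by (simp add: mult.commute)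
    then have "b \<in> principal_ideal a"
      using integrally_closed_mem_principal_ideal[OF noeth IC a(2) M(1)] a by blast
    then show False
      using b(2) by blast
  qed
  ultimately show "M \<subset> ideal_quot (ideal_mult M J) {a}"
    unfolding N_def by blast
qed

lemma invertible_ideal_if_image_mult_eq:
  fixes a :: "'a::idom"
  assumes "is_ideal N" "invertible_ideal N" "a \<noteq> 0" "(*) a ` N = ideal_mult M J"
  shows "invertible_ideal M"
proof -
  obtain K c where K: "is_ideal K" "c \<noteq> 0" "ideal_mult N K = principal_ideal c"
    using assms(2) unfolding invertible_ideal_def by blast
  have "ideal_mult M (ideal_mult J K) = ideal_mult ((*) a ` N) K"
    unfolding assms(4) by (rule ideal_mult_assoc[symmetric])
  also have "\<dots> = principal_ideal (a * c)"
    unfolding ideal_mult_image_mult[OF assms(1)] K(3) by (rule image_mult_principal_ideal)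
  finally show ?thesis
    unfolding invertible_ideal_def using assms(3) K(2)
    by (intro exI[of _ "ideal_mult J K"] exI[of _ "a * c"]) (simp add: is_ideal_ideal_mult)
qed

text \<open>A nonzero ideal \<open>M \<noteq> R\<close> lies in a maximal ideal \<open>P\<close>, and \<open>M\<close> times \<open>((a) : P)\<close> is \<open>a\<close> times the
  ideal \<open>(M ((a) : P) : a)\<close>, which properly contains \<open>M\<close> and is therefore invertible by Noetherian
  induction.\<close>

theorem dedekind_domain_invertible_ideal:
  fixes I :: "'a::idom set"
  assumes ded: "dedekind_domain TYPE('a)" and "is_ideal I" "I \<noteq> {0}"
  shows "invertible_ideal I"
proof -
  have noeth: "noetherian_ring TYPE('a)"
    using ded unfolding dedekind_domain_def by auto
  show ?thesis
    using noeth \<open>is_ideal I\<close> \<open>I \<noteq> {0}\<close>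
  proof (induction I rule: noetherian_ideal_induct)
    case (step M)
    show ?case
    proof (cases "M = UNIV")
      case False
      then obtain P where P: "maximal_ideal P" "M \<subseteq> P"
        by (rule noetherian_exists_maximal_ideal[OF noeth step.hyps])
      obtain a where a: "a \<in> M" "a \<noteq> 0"
        using step.prems is_ideal_0[OF step.hyps] by blast
      define N where "N = ideal_quot (ideal_mult M (ideal_quot (principal_ideal a) P)) {a}"
      have "M \<subset> N" and aN: "(*) a ` N = ideal_mult M (ideal_quot (principal_ideal a) P)"
        unfolding N_def by (rule dedekind_psubset_ideal_quot[OF ded P(1) step.hyps P(2) a])+
      have N: "is_ideal N"
        unfolding N_def by (intro is_ideal_ideal_quot is_ideal_ideal_mult)
      moreover have "invertible_ideal N"
        using step.IH[OF N \<open>M \<subset> N\<close>] \<open>M \<subset> N\<close> step.prems is_ideal_0[OF step.hyps] by auto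
      ultimately show ?thesis
        using a(2) aN by (rule invertible_ideal_if_image_mult_eq)
    qed (simp add: invertible_ideal_UNIV)
  qed
qed

section \<open>Determinantal ideals\<close>

lemma pick_eqI: "x \<in> S \<Longrightarrow> card {a\<in>S. a < x} = n \<Longrightarrow> pick S n = x"
  using pick_card_in_set by blast

lemma pick_lessThan:
  assumes "t < n"
  shows "pick {..<n} t = t"
proof (rule pick_eqI)
  have "{a\<in>{..<n}. a < t} = {..<t}"
    using assms by auto
  then show "card {a\<in>{..<n}. a < t} = t"
    by simp
qed (use assms in simp)

lemma inj_on_pick: "inj_on (pick S) {..<card S}"
  by (rule strict_mono_on_imp_inj_on) (auto simp: strict_mono_on_def intro!: pick_mono_le)

lemma pick_Diff_pick:
  assumes "finite J" "j < card J" "j' < card J - 1"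
  shows "pick (J - {pick J j}) j' = pick J (if j' < j then j' else Suc j')"
proof -
  define t where "t = (if j' < j then j' else Suc j')"
  have t: "t < card J" "t \<noteq> j"
    using assms(2,3) unfolding t_def by auto
  have "pick J t \<noteq> pick J j"
    using inj_on_pick[of J] t assms(2) unfolding inj_on_def by blast
  moreover have "pick J j < pick J t \<longleftrightarrow> j < t"
    using pick_mono_le[OF t(1), of j] pick_mono_le[OF assms(2), of t] t(2) by (cases "t < j") auto
  moreover have "{a\<in>J - {pick J j}. a < pick J t} = {a\<in>J. a < pick J t} - {pick J j}"
    by auto
  ultimately have "card {a\<in>J - {pick J j}. a < pick J t} = j'"
    using assms(1,2) t(1) by (simp add: card_Diff_singleton_if card_pick_le pick_in_set_le t_def)
  then show ?thesis
    unfolding t_def[symmetric] using pick_in_set_le[OF t(1)] \<open>pick J t \<noteq> pick J j\<close>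
    by (intro pick_eqI) auto
qed

lemma submatrix_carrier_mat:
  assumes "I \<subseteq> {..<dim_row A}" "J \<subseteq> {..<dim_col A}"
  shows "submatrix A I J \<in> carrier_mat (card I) (card J)"
proof -
  have "{i. i < dim_row A \<and> i \<in> I} = I" "{j. j < dim_col A \<and> j \<in> J} = J"
    using assms by auto
  then show ?thesis
    unfolding carrier_mat_def by (simp add: dim_submatrix)
qed

lemma submatrix_index_subset:
  assumes "I \<subseteq> {..<dim_row A}" "J \<subseteq> {..<dim_col A}" "i < card I" "j < card J"
  shows "submatrix A I J $$ (i, j) = A $$ (pick I i, pick J j)"
proof -
  have "{i. i < dim_row A \<and> i \<in> I} = I" "{j. j < dim_col A \<and> j \<in> J} = J"
    using assms(1,2) by auto
  then show ?thesis
    using assms(3,4) by (intro submatrix_index) simp_all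
qed

lemma mat_delete_submatrix:
  assumes I: "I \<subseteq> {..<dim_row A}" and J: "J \<subseteq> {..<dim_col A}" and "i < card I" "j < card J"
  shows "mat_delete (submatrix A I J) i j = submatrix A (I - {pick I i}) (J - {pick J j})"
proof -
  have fin: "finite I" "finite J"
    using I J finite_subset by auto
  have I': "I - {pick I i} \<subseteq> {..<dim_row A}" "card (I - {pick I i}) = card I - 1"
    using I fin pick_in_set_le[OF \<open>i < card I\<close>] by auto
  have J': "J - {pick J j} \<subseteq> {..<dim_col A}" "card (J - {pick J j}) = card J - 1"
    using J fin pick_in_set_le[OF \<open>j < card J\<close>] by auto
  show ?thesis
  proof (rule eq_matI)
    fix i' j' assume "i' < dim_row (submatrix A (I - {pick I i}) (J - {pick J j}))"
      "j' < dim_col (submatrix A (I - {pick I i}) (J - {pick J j}))"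
    then have "i' < card I - 1" "j' < card J - 1"
      using submatrix_carrier_mat[OF I'(1) J'(1)] I'(2) J'(2) by auto
    then show "mat_delete (submatrix A I J) i j $$ (i', j')
        = submatrix A (I - {pick I i}) (J - {pick J j}) $$ (i', j')"
      using submatrix_carrier_mat[OF I J] I'(2) J'(2)
      by (simp add: mat_delete_def submatrix_index_subset[OF I J] submatrix_index_subset[OF I'(1) J'(1)]
          pick_Diff_pick[OF fin(1) \<open>i < card I\<close>] pick_Diff_pick[OF fin(2) \<open>j < card J\<close>])
  qed (use submatrix_carrier_mat[OF I J] submatrix_carrier_mat[OF I'(1) J'(1)] I'(2) J'(2) in auto)
qed

lemma is_ideal_det_ideal: "is_ideal (det_ideal G k)"
  unfolding det_ideal_def by (rule is_ideal_ideal_gen)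

lemma det_submatrix_mem_det_ideal:
  assumes "I \<subseteq> {..<dim_row G}" "J \<subseteq> {..<dim_col G}" "card I = k" "card J = k"
  shows "det (submatrix G I J) \<in> det_ideal G k"
  unfolding det_ideal_def using assms by (intro subsetD[OF ideal_gen_superset]) blast

lemma det_ideal_least:
  assumes "is_ideal K"
    and "\<And>I J. I \<subseteq> {..<dim_row G} \<Longrightarrow> J \<subseteq> {..<dim_col G} \<Longrightarrow> card I = k \<Longrightarrow> card J = k
      \<Longrightarrow> det (submatrix G I J) \<in> K"
  shows "det_ideal G k \<subseteq> K"
  unfolding det_ideal_def using assms by (intro ideal_gen_least) auto

definition minors :: "'a::comm_ring_1 mat \<Rightarrow> nat \<Rightarrow> 'a set" where
  "minors G k = {det (submatrix G I J) | I J.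
     I \<subseteq> {..<dim_row G} \<and> J \<subseteq> {..<dim_col G} \<and> card I = k \<and> card J = k}"

lemma det_ideal_eq_ideal_gen_minors: "det_ideal G k = ideal_gen (minors G k)"
  unfolding det_ideal_def minors_def ..

lemma det_ideal_Suc_subset: "det_ideal G (Suc k) \<subseteq> det_ideal G k"
proof (rule det_ideal_least[OF is_ideal_det_ideal])
  fix I J assume I: "I \<subseteq> {..<dim_row G}" "card I = Suc k" and J: "J \<subseteq> {..<dim_col G}" "card J = Suc k"
  define A where "A = submatrix G I J"
  have A: "A \<in> carrier_mat (Suc k) (Suc k)"
    unfolding A_def using submatrix_carrier_mat[OF I(1) J(1)] I(2) J(2) by simp
  have fin: "finite I" "finite J"
    using I(1) J(1) finite_subset by auto
  have "det A = (\<Sum>j<Suc k. A $$ (k, j) * cofactor A k j)"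
    by (rule laplace_expansion_row[OF A]) simp
  also have "\<dots> \<in> det_ideal G k"
  proof (rule is_ideal_sum[OF is_ideal_det_ideal])
    fix j assume "j \<in> {..<Suc k}"
    then have "mat_delete A k j = submatrix G (I - {pick I k}) (J - {pick J j})"
      unfolding A_def using I J by (intro mat_delete_submatrix) auto
    moreover have "det (submatrix G (I - {pick I k}) (J - {pick J j})) \<in> det_ideal G k"
      using I J fin \<open>j \<in> {..<Suc k}\<close> pick_in_set_le[of k I] pick_in_set_le[of j J]
      by (intro det_submatrix_mem_det_ideal) auto
    ultimately show "A $$ (k, j) * cofactor A k j \<in> det_ideal G k"
      unfolding cofactor_def by (simp add: is_ideal_mult_left[OF is_ideal_det_ideal])
  qed
  finally show "det (submatrix G I J) \<in> det_ideal G k"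
    unfolding A_def .
qed

lemma det_ideal_antimono: "k \<le> m \<Longrightarrow> det_ideal G m \<subseteq> det_ideal G k"
  by (rule lift_Suc_antimono_le[of "det_ideal G"]) (rule det_ideal_Suc_subset)

lemma det_ideal_0: "det_ideal G 0 = UNIV"
proof -
  have "det (submatrix G {} {}) = 1"
    using submatrix_carrier_mat[of "{}" G "{}"] by (simp add: det_def)
  then have "1 \<in> det_ideal G 0"
    using det_submatrix_mem_det_ideal[of "{}" G "{}" 0] by simp
  then show ?thesis
    using is_ideal_mult_right[OF is_ideal_det_ideal, of 1 G 0] by auto
qed

lemma det_mem_det_ideal:
  assumes "G \<in> carrier_mat n n"
  shows "det G \<in> det_ideal G n"
proof -
  have "submatrix G {..<n} {..<n} = G"
    using assms submatrix_carrier_mat[of "{..<n}" G "{..<n}"]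
    by (intro eq_matI) (auto simp: submatrix_index_subset pick_lessThan)
  then show ?thesis
    using det_submatrix_mem_det_ideal[of "{..<n}" G "{..<n}" n] assms by simp
qed

text \<open>The case \<open>i = 1\<close>, where \<open>smith_ideal\<close> is defined separately, fits because \<open>D\<^sub>0 = R\<close>.\<close>

lemma smith_ideal_eqI:
  fixes G :: "'a::idom mat"
  assumes "1 \<le> i" and inv: "invertible_ideal (det_ideal G (i - 1))" and nz: "det_ideal G (i - 1) \<noteq> {0}"
    and d: "is_ideal d" "ideal_mult d (det_ideal G (i - 1)) = det_ideal G i"
  shows "smith_ideal G i = d"
proof (cases "i = 1")
  case True
  have "ideal_mult (det_ideal G 1) (det_ideal G 0) = det_ideal G 1"
    unfolding det_ideal_0 ideal_mult_commute[of _ UNIV] by (rule ideal_mult_UNIV_left[OF is_ideal_det_ideal])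
  then have "ideal_mult (det_ideal G 1) (det_ideal G (i - 1)) = ideal_mult d (det_ideal G (i - 1))"
    using True d(2) by simp
  then have "det_ideal G 1 = d"
    by (rule invertible_ideal_cancel[OF inv is_ideal_det_ideal d(1)])
  moreover have "smith_ideal G i = det_ideal G 1"
    unfolding smith_ideal_def using True by (rule if_P)
  ultimately show ?thesis
    by simp
next
  case False
  have "(THE e. is_ideal e \<and> ideal_mult e (det_ideal G (i - 1)) = det_ideal G i) = d"
  proof (rule the_equality)
    show "is_ideal d \<and> ideal_mult d (det_ideal G (i - 1)) = det_ideal G i"
      using d by simp
    fix e assume e: "is_ideal e \<and> ideal_mult e (det_ideal G (i - 1)) = det_ideal G i"
    then have "is_ideal e" "ideal_mult e (det_ideal G (i - 1)) = ideal_mult d (det_ideal G (i - 1))"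
      using d(2) by simp_all
    then show "e = d"
      by (rule invertible_ideal_cancel[OF inv _ d(1)])
  qed
  moreover have "smith_ideal G i = (THE e. is_ideal e \<and> ideal_mult e (det_ideal G (i - 1)) = det_ideal G i)"
    unfolding smith_ideal_def using False nz by (simp only: if_False if_True not_False_eq_True)
  ultimately show ?thesis
    by simp
qed

lemma dedekind_domain_smith_ideal:
  fixes G :: "'a::idom mat"
  assumes ded: "dedekind_domain TYPE('a)" and "1 \<le> i" and nz: "det_ideal G (i - 1) \<noteq> {0}"
  shows "is_ideal (smith_ideal G i)"
    and "ideal_mult (smith_ideal G i) (det_ideal G (i - 1)) = det_ideal G i"
proof -
  have inv: "invertible_ideal (det_ideal G (i - 1))"
    by (rule dedekind_domain_invertible_ideal[OF ded is_ideal_det_ideal nz])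
  have "det_ideal G i \<subseteq> det_ideal G (i - 1)"
    using det_ideal_Suc_subset[of G "i - 1"] \<open>1 \<le> i\<close> by simp
  then obtain d where d: "is_ideal d" "ideal_mult d (det_ideal G (i - 1)) = det_ideal G i"
    using invertible_ideal_dvd[OF inv is_ideal_det_ideal is_ideal_det_ideal] by blast
  moreover have "smith_ideal G i = d"
    using \<open>1 \<le> i\<close> inv nz d by (rule smith_ideal_eqI)
  ultimately show "is_ideal (smith_ideal G i)"
    and "ideal_mult (smith_ideal G i) (det_ideal G (i - 1)) = det_ideal G i"
    by simp_all
qed

section \<open>Complementary minors of a scaled orthogonal matrix\<close>

lemma det_square_of_mult_transpose:
  fixes G :: "'a::comm_ring_1 mat"
  assumes G: "G \<in> carrier_mat n n" and GG: "G * transpose_mat G = c \<cdot>\<^sub>m 1\<^sub>m n"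
  shows "det G * det G = c ^ n"
proof -
  have "det (G * transpose_mat G) = det G * det (transpose_mat G)"
    using G by (intro det_mult) auto
  then show ?thesis
    unfolding GG det_transpose[OF G] by simp
qed

lemma det_nonzero_if_mult_transpose:
  fixes G :: "'a::idom mat"
  assumes "G \<in> carrier_mat n n" "G * transpose_mat G = c \<cdot>\<^sub>m 1\<^sub>m n" "c \<noteq> 0"
  shows "det G \<noteq> 0"
  using det_square_of_mult_transpose[OF assms(1,2)] assms(3) by auto

lemma mult_transpose_entry:
  fixes G :: "'a::comm_ring_1 mat"
  assumes G: "G \<in> carrier_mat n n" and GG: "G * transpose_mat G = c \<cdot>\<^sub>m 1\<^sub>m n"
    and "i < n" "s < n"
  shows "(\<Sum>r<n. G $$ (i, r) * G $$ (s, r)) = (if i = s then c else 0)"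
proof -
  have "(\<Sum>r<n. G $$ (i, r) * G $$ (s, r)) = (G * transpose_mat G) $$ (i, s)"
    using G assms(3,4) by (simp add: scalar_prod_def atLeast0LessThan)
  also have "\<dots> = (if i = s then c else 0)"
    using assms(3,4) unfolding GG by simp
  finally show ?thesis .
qed

lemma mult_transpose_columns_block:
  fixes G :: "'a::comm_ring_1 mat"
  assumes G: "G \<in> carrier_mat n n" and GG: "G * transpose_mat G = c \<cdot>\<^sub>m 1\<^sub>m n" and k: "k \<le> n"
  shows "G * mat n n (\<lambda>(r, s). if s < k then G $$ (s, r) else if r = s then c else 0)
    = four_block_mat (c \<cdot>\<^sub>m 1\<^sub>m k) (mat k (n - k) (\<lambda>(i, j). c * G $$ (i, k + j)))
        (0\<^sub>m (n - k) k) (c \<cdot>\<^sub>m mat (n - k) (n - k) (\<lambda>(i, j). G $$ (k + i, k + j)))"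
    (is "G * ?M = ?B")
proof -
  define P where "P = mat n n (\<lambda>(i, s). if s < k then (if i = s then c else 0) else c * G $$ (i, s))"
  have "G * ?M = P"
  proof (rule eq_matI)
    fix i s assume "i < dim_row P" "s < dim_col P"
    then have bounds: "i < n" "s < n"
      unfolding P_def by auto
    have "(G * ?M) $$ (i, s) = (\<Sum>r<n. G $$ (i, r) * ?M $$ (r, s))"
      using G bounds by (simp add: scalar_prod_def atLeast0LessThan)
    also have "\<dots> = P $$ (i, s)"
    proof (cases "s < k")
      case True
      then have "(\<Sum>r<n. G $$ (i, r) * ?M $$ (r, s)) = (\<Sum>r<n. G $$ (i, r) * G $$ (s, r))"
        using bounds by (intro sum.cong) auto
      then show ?thesis
        using mult_transpose_entry[OF G GG bounds] True bounds unfolding P_def by simp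
    next
      case False
      then have "(\<Sum>r<n. G $$ (i, r) * ?M $$ (r, s)) = (\<Sum>r<n. if r = s then G $$ (i, r) * c else 0)"
        using bounds by (intro sum.cong) auto
      also have "\<dots> = G $$ (i, s) * c"
        using bounds by simp
      finally show ?thesis
        using False bounds unfolding P_def by (simp add: mult.commute)
    qed
    finally show "(G * ?M) $$ (i, s) = P $$ (i, s)" .
  qed (use G in \<open>auto simp: P_def\<close>)
  also have "P = ?B"
    by (rule eq_matI) (use k in \<open>auto simp: P_def\<close>)
  finally show ?thesis .
qed

lemma jacobi_leading_block:
  fixes G :: "'a::idom mat"
  assumes G: "G \<in> carrier_mat n n" and GG: "G * transpose_mat G = c \<cdot>\<^sub>m 1\<^sub>m n" and k: "k \<le> n"
  shows "det G * det (mat k k (\<lambda>(i, j). G $$ (i, j))) * c ^ (n - k)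
       = c ^ n * det (mat (n - k) (n - k) (\<lambda>(i, j). G $$ (k + i, k + j)))"
proof -
  define A where "A = mat k k (\<lambda>(i, j). G $$ (i, j))"
  define D where "D = mat (n - k) (n - k) (\<lambda>(i, j). G $$ (k + i, k + j))"
  define M where "M = mat n n (\<lambda>(r, s). if s < k then G $$ (s, r) else if r = s then c else 0)"
  have M: "M \<in> carrier_mat n n"
    unfolding M_def by simp
  have "M = four_block_mat (transpose_mat A) (0\<^sub>m k (n - k))
      (mat (n - k) k (\<lambda>(i, j). G $$ (j, k + i))) (c \<cdot>\<^sub>m 1\<^sub>m (n - k))"
    by (rule eq_matI) (use k in \<open>auto simp: M_def A_def\<close>)
  then have "det M = det A * c ^ (n - k)"
    using det_transpose[of A k] by (simp add: det_four_block_mat_upper_right_zero[of _ k _ "n - k"] A_def)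
  have "det G * det M = det (G * M)"
    by (rule det_mult[OF G M, symmetric])
  also have "\<dots> = c ^ k * (c ^ (n - k) * det D)"
    unfolding M_def mult_transpose_columns_block[OF G GG k] D_def
    by (subst det_four_block_mat_lower_left_zero[of _ k _ "n - k"]) auto
  also have "\<dots> = c ^ n * det D"
    using k by (simp add: power_add[symmetric])
  finally show ?thesis
    using \<open>det M = det A * c ^ (n - k)\<close> unfolding A_def D_def by (simp add: ac_simps)
qed

lemma mult_transpose_reindex:
  fixes G :: "'a::comm_ring_1 mat"
  assumes G: "G \<in> carrier_mat n n" and GG: "G * transpose_mat G = c \<cdot>\<^sub>m 1\<^sub>m n"
    and p: "bij_betw p {..<n} {..<n}" and q: "bij_betw q {..<n} {..<n}"
  defines "H \<equiv> mat n n (\<lambda>(i, j). G $$ (p i, q j))"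
  shows "H * transpose_mat H = c \<cdot>\<^sub>m 1\<^sub>m n"
proof (rule eq_matI)
  fix i i' assume "i < dim_row (c \<cdot>\<^sub>m 1\<^sub>m n)" "i' < dim_col (c \<cdot>\<^sub>m 1\<^sub>m n)"
  then have ii: "i < n" "i' < n"
    by auto
  then have pii: "p i < n" "p i' < n"
    using p unfolding bij_betw_def by auto
  have "(H * transpose_mat H) $$ (i, i') = (\<Sum>j<n. G $$ (p i, q j) * G $$ (p i', q j))"
    using ii by (simp add: H_def scalar_prod_def atLeast0LessThan)
  also have "\<dots> = (\<Sum>j<n. G $$ (p i, j) * G $$ (p i', j))"
    by (rule sum.reindex_bij_betw[OF q])
  also have "\<dots> = (if p i = p i' then c else 0)"
    by (rule mult_transpose_entry[OF G GG pii])
  also have "\<dots> = (c \<cdot>\<^sub>m 1\<^sub>m n) $$ (i, i')"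
    using p ii unfolding bij_betw_def inj_on_def by auto
  finally show "(H * transpose_mat H) $$ (i, i') = (c \<cdot>\<^sub>m 1\<^sub>m n) $$ (i, i')" .
qed (auto simp: H_def)

definition pick_then_compl :: "nat \<Rightarrow> nat set \<Rightarrow> nat \<Rightarrow> nat" where
  "pick_then_compl n I i = (if i < card I then pick I i else pick ({..<n} - I) (i - card I))"

lemma pick_then_compl_mem:
  assumes I: "I \<subseteq> {..<n}" and "i < n"
  shows "pick_then_compl n I i \<in> {..<n}" and "pick_then_compl n I i \<in> I \<longleftrightarrow> i < card I"
proof -
  have "card ({..<n} - I) = n - card I"
    using I finite_subset[OF I] by (simp add: card_Diff_subset)
  then have "pick_then_compl n I i \<in> (if i < card I then I else {..<n} - I)"
    unfolding pick_then_compl_def using \<open>i < n\<close> pick_in_set_le[of i I]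
      pick_in_set_le[of "i - card I" "{..<n} - I"] by auto
  then show "pick_then_compl n I i \<in> {..<n}" and "pick_then_compl n I i \<in> I \<longleftrightarrow> i < card I"
    using I by (auto split: if_splits)
qed

lemma bij_betw_pick_then_compl:
  assumes I: "I \<subseteq> {..<n}"
  shows "bij_betw (pick_then_compl n I) {..<n} {..<n}"
proof -
  have cIc: "card ({..<n} - I) = n - card I"
    using I finite_subset[OF I] by (simp add: card_Diff_subset)
  have "inj_on (pick_then_compl n I) {..<n}"
  proof (rule inj_onI)
    fix i j assume i: "i \<in> {..<n}" and j: "j \<in> {..<n}"
      and eq: "pick_then_compl n I i = pick_then_compl n I j"
    then have "i < card I \<longleftrightarrow> j < card I"
      using pick_then_compl_mem(2)[OF I] by (metis lessThan_iff)
    then consider "i < card I" "j < card I" | "card I \<le> i" "card I \<le> j"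
      by linarith
    then show "i = j"
    proof cases
      case 1
      then show ?thesis
        using eq inj_on_pick[of I] unfolding pick_then_compl_def inj_on_def by auto
    next
      case 2
      then have "i - card I = j - card I"
        using eq inj_on_pick[of "{..<n} - I"] i j cIc unfolding pick_then_compl_def inj_on_def by auto
      then show ?thesis
        using 2 by simp
    qed
  qed
  moreover have "pick_then_compl n I ` {..<n} \<subseteq> {..<n}"
    using pick_then_compl_mem(1)[OF I] by auto
  ultimately show ?thesis
    unfolding bij_betw_def using endo_inj_surj[of "{..<n}"] by auto
qed

definition reorder_mat :: "nat \<Rightarrow> nat set \<Rightarrow> nat set \<Rightarrow> 'a mat \<Rightarrow> 'a mat" where
  "reorder_mat n I J G = mat n n (\<lambda>(i, j). G $$ (pick_then_compl n I i, pick_then_compl n J j))"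

lemma reorder_mat_leading_block:
  assumes G: "G \<in> carrier_mat n n" and I: "I \<subseteq> {..<n}" "card I = k" and J: "J \<subseteq> {..<n}" "card J = k"
  shows "mat k k (\<lambda>(i, j). reorder_mat n I J G $$ (i, j)) = submatrix G I J"
proof (rule eq_matI)
  have kn: "k \<le> n"
    using I card_mono[of "{..<n}" I] by simp
  fix i j assume "i < dim_row (submatrix G I J)" "j < dim_col (submatrix G I J)"
  then have "i < k" "j < k"
    using submatrix_carrier_mat[of I G J] G I J by auto
  then show "mat k k (\<lambda>(i, j). reorder_mat n I J G $$ (i, j)) $$ (i, j) = submatrix G I J $$ (i, j)"
    using kn G I J submatrix_index_subset[of I G J i j]
    by (simp add: reorder_mat_def pick_then_compl_def)
qed (use submatrix_carrier_mat[of I G J] G I J in auto)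

lemma reorder_mat_trailing_block:
  assumes G: "G \<in> carrier_mat n n" and I: "I \<subseteq> {..<n}" "card I = k" and J: "J \<subseteq> {..<n}" "card J = k"
  shows "mat (n - k) (n - k) (\<lambda>(i, j). reorder_mat n I J G $$ (k + i, k + j))
    = submatrix G ({..<n} - I) ({..<n} - J)"
proof (rule eq_matI)
  have cIJ: "card ({..<n} - I) = n - k" "card ({..<n} - J) = n - k"
    using I J finite_subset[OF I(1)] finite_subset[OF J(1)] by (simp_all add: card_Diff_subset)
  have sub: "{..<n} - I \<subseteq> {..<dim_row G}" "{..<n} - J \<subseteq> {..<dim_col G}"
    using G by auto
  fix i j assume "i < dim_row (submatrix G ({..<n} - I) ({..<n} - J))"
    "j < dim_col (submatrix G ({..<n} - I) ({..<n} - J))"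
  then have "i < n - k" "j < n - k"
    using submatrix_carrier_mat[OF sub] cIJ by auto
  then show "mat (n - k) (n - k) (\<lambda>(i, j). reorder_mat n I J G $$ (k + i, k + j)) $$ (i, j)
      = submatrix G ({..<n} - I) ({..<n} - J) $$ (i, j)"
    using I J cIJ submatrix_index_subset[OF sub, of i j]
    by (simp add: reorder_mat_def pick_then_compl_def)
qed (use submatrix_carrier_mat[of "{..<n} - I" G "{..<n} - J"] G I J
       finite_subset[OF I(1)] finite_subset[OF J(1)] in \<open>auto simp: card_Diff_subset\<close>)

lemma complementary_minor:
  fixes G :: "'a::idom mat"
  assumes G: "G \<in> carrier_mat n n" and GG: "G * transpose_mat G = l^2 \<cdot>\<^sub>m 1\<^sub>m n" and "l \<noteq> 0"
    and I: "I \<subseteq> {..<n}" "card I = k" and J: "J \<subseteq> {..<n}" "card J = k" and "2 * k \<le> n"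
  obtains e where "e = 1 \<or> e = -1"
    "det (submatrix G ({..<n} - I) ({..<n} - J)) = e * l ^ (n - 2 * k) * det (submatrix G I J)"
proof -
  define H where "H = reorder_mat n I J G"
  have H: "H \<in> carrier_mat n n"
    unfolding H_def reorder_mat_def by simp
  have HH: "H * transpose_mat H = l^2 \<cdot>\<^sub>m 1\<^sub>m n"
    unfolding H_def reorder_mat_def
    by (rule mult_transpose_reindex[OF G GG bij_betw_pick_then_compl[OF I(1)] bij_betw_pick_then_compl[OF J(1)]])
  have "det H * det H = (l^2) ^ n"
    by (rule det_square_of_mult_transpose[OF H HH])
  also have "\<dots> = l ^ n * l ^ n"
    by (simp add: power_mult_distrib[symmetric] power2_eq_square)
  finally have "det H * det H = l ^ n * l ^ n" .
  then obtain e :: 'a where e: "e = 1 \<or> e = -1" "det H = e * l ^ n"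
    by (metis square_eq_iff mult_minus_left mult_1)
  obtain q where q: "n = 2 * k + q"
    using \<open>2 * k \<le> n\<close> le_Suc_ex by blast
  define a where "a = det (submatrix G I J)"
  define d where "d = det (submatrix G ({..<n} - I) ({..<n} - J))"
  have "e * l ^ n * a * (l^2) ^ (n - k) = (l^2) ^ n * d"
    using jacobi_leading_block[OF H HH, of k] \<open>2 * k \<le> n\<close> e(2)
    unfolding reorder_mat_leading_block[OF G I J, folded H_def] reorder_mat_trailing_block[OF G I J, folded H_def]
      a_def d_def by simp
  then have "l ^ (4 * k + 2 * q) * d = l ^ (4 * k + 2 * q) * (e * l ^ q * a)"
    unfolding q by (simp add: power_mult[symmetric] power_add[symmetric] algebra_simps)
  then have "d = e * l ^ q * a"
    using \<open>l \<noteq> 0\<close> by simp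
  then show ?thesis
    using that e(1) q unfolding a_def d_def by simp
qed

lemma ideal_gen_eq_image_mult:
  fixes c :: "'a::comm_ring_1"
  assumes TS: "\<And>y. y \<in> T \<Longrightarrow> \<exists>x\<in>S. y = c * x \<or> y = - (c * x)"
    and ST: "\<And>x. x \<in> S \<Longrightarrow> \<exists>y\<in>T. c * x = y \<or> c * x = - y"
  shows "ideal_gen T = (*) c ` ideal_gen S"
proof
  show "ideal_gen T \<subseteq> (*) c ` ideal_gen S"
  proof (rule ideal_gen_least[OF is_ideal_image_mult[OF is_ideal_ideal_gen]], rule subsetI)
    fix y assume "y \<in> T"
    then obtain x where x: "x \<in> S" "y = c * x \<or> y = c * (- x)"
      using TS by fastforce
    moreover have "x \<in> ideal_gen S" "- x \<in> ideal_gen S"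
      using x(1) ideal_gen_superset is_ideal_uminus[OF is_ideal_ideal_gen] by blast+
    ultimately show "y \<in> (*) c ` ideal_gen S"
      by blast
  qed
  have "ideal_gen S \<subseteq> ideal_quot (ideal_gen T) {c}"
  proof (rule ideal_gen_least[OF is_ideal_ideal_quot[OF is_ideal_ideal_gen]], rule subsetI)
    fix x assume "x \<in> S"
    then obtain y where y: "y \<in> T" "c * x = y \<or> c * x = - y"
      using ST by blast
    then have "y \<in> ideal_gen T" "- y \<in> ideal_gen T"
      using ideal_gen_superset is_ideal_uminus[OF is_ideal_ideal_gen] by blast+
    then show "x \<in> ideal_quot (ideal_gen T) {c}"
      unfolding ideal_quot_singleton using y(2) by auto
  qed
  then show "(*) c ` ideal_gen S \<subseteq> ideal_gen T"
    unfolding ideal_quot_singleton by blast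
qed

lemma det_submatrix_compl_mem_minors:
  assumes G: "G \<in> carrier_mat n n" and I: "I \<subseteq> {..<n}" "card I = m" and J: "J \<subseteq> {..<n}" "card J = m"
  shows "det (submatrix G ({..<n} - I) ({..<n} - J)) \<in> minors G (n - m)"
  unfolding minors_def using G I J finite_subset[OF I(1)] finite_subset[OF J(1)]
  by (intro CollectI exI[of _ "{..<n} - I"] exI[of _ "{..<n} - J"]) (auto simp: card_Diff_subset)

lemma det_ideal_complementary:
  fixes G :: "'a::idom mat"
  assumes G: "G \<in> carrier_mat n n" and GG: "G * transpose_mat G = l^2 \<cdot>\<^sub>m 1\<^sub>m n" and "l \<noteq> 0"
    and "2 * k \<le> n"
  shows "det_ideal G (n - k) = (*) (l ^ (n - 2 * k)) ` det_ideal G k"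
  unfolding det_ideal_eq_ideal_gen_minors
proof (rule ideal_gen_eq_image_mult)
  fix y assume "y \<in> minors G (n - k)"
  then obtain I J where I: "I \<subseteq> {..<n}" "card I = n - k" and J: "J \<subseteq> {..<n}" "card J = n - k"
    and y: "y = det (submatrix G I J)"
    using G unfolding minors_def by blast
  have compl: "{..<n} - I \<subseteq> {..<n}" "card ({..<n} - I) = k" "{..<n} - ({..<n} - I) = I"
    "{..<n} - J \<subseteq> {..<n}" "card ({..<n} - J) = k" "{..<n} - ({..<n} - J) = J"
    using I J finite_subset[OF I(1)] finite_subset[OF J(1)] \<open>2 * k \<le> n\<close> by (auto simp: card_Diff_subset)
  obtain e where e: "e = 1 \<or> e = -1"
    "y = e * l ^ (n - 2 * k) * det (submatrix G ({..<n} - I) ({..<n} - J))"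
    using complementary_minor[OF G GG \<open>l \<noteq> 0\<close> compl(1,2,4,5) \<open>2 * k \<le> n\<close>] unfolding y compl(3,6) by blast
  have "det (submatrix G ({..<n} - I) ({..<n} - J)) \<in> minors G k"
    using det_submatrix_compl_mem_minors[OF G I J] \<open>2 * k \<le> n\<close> by simp
  moreover have "y = l ^ (n - 2 * k) * det (submatrix G ({..<n} - I) ({..<n} - J))
      \<or> y = - (l ^ (n - 2 * k) * det (submatrix G ({..<n} - I) ({..<n} - J)))"
    using e by auto
  ultimately show "\<exists>x\<in>minors G k. y = l ^ (n - 2 * k) * x \<or> y = - (l ^ (n - 2 * k) * x)"
    by blast
next
  fix x assume "x \<in> minors G k"
  then obtain I J where I: "I \<subseteq> {..<n}" "card I = k" and J: "J \<subseteq> {..<n}" "card J = k"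
    and x: "x = det (submatrix G I J)"
    using G unfolding minors_def by blast
  obtain e where e: "e = 1 \<or> e = -1"
    "det (submatrix G ({..<n} - I) ({..<n} - J)) = e * l ^ (n - 2 * k) * x"
    using complementary_minor[OF G GG \<open>l \<noteq> 0\<close> I J \<open>2 * k \<le> n\<close>] unfolding x by blast
  have "det (submatrix G ({..<n} - I) ({..<n} - J)) \<in> minors G (n - k)"
    by (rule det_submatrix_compl_mem_minors[OF G I J])
  moreover have "l ^ (n - 2 * k) * x = det (submatrix G ({..<n} - I) ({..<n} - J))
      \<or> l ^ (n - 2 * k) * x = - det (submatrix G ({..<n} - I) ({..<n} - J))"
    using e by auto
  ultimately show "\<exists>y\<in>minors G (n - k). l ^ (n - 2 * k) * x = y \<or> l ^ (n - 2 * k) * x = - y"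
    by blast
qed

lemma det_ideal_nonzero:
  assumes "G \<in> carrier_mat n n" "det G \<noteq> 0" "k \<le> n"
  shows "det_ideal G k \<noteq> {0}"
  using det_mem_det_ideal[OF assms(1)] det_ideal_antimono[OF assms(3)] assms(2) by blast

text \<open>\<open>D\<^sub>n\<^sub>-\<^sub>i = l\<^sup>n\<^sup>-\<^sup>2\<^sup>i D\<^sub>i\<close> and \<open>D\<^sub>n\<^sub>-\<^sub>i\<^sub>+\<^sub>1 = l\<^sup>n\<^sup>-\<^sup>2\<^sup>i\<^sup>+\<^sup>2 D\<^sub>i\<^sub>-\<^sub>1\<close>; cancelling
  the common factor \<open>l\<^sup>n\<^sup>-\<^sup>2\<^sup>i\<close> in \<open>d\<^sub>n\<^sub>-\<^sub>i\<^sub>+\<^sub>1 D\<^sub>n\<^sub>-\<^sub>i = D\<^sub>n\<^sub>-\<^sub>i\<^sub>+\<^sub>1\<close> gives the claim.\<close>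

lemma smith_ideal_mult_det_ideal_complementary:
  fixes G :: "'a::idom mat"
  assumes ded: "dedekind_domain TYPE('a)" and G: "G \<in> carrier_mat n n" and "l \<noteq> 0"
    and GG: "G * transpose_mat G = l^2 \<cdot>\<^sub>m 1\<^sub>m n" and "1 \<le> i" "2 * i \<le> n"
  shows "ideal_mult (smith_ideal G (n - i + 1)) (det_ideal G i) = (*) (l^2) ` det_ideal G (i - 1)"
proof -
  define y where "y = smith_ideal G (n - i + 1)"
  have "det G \<noteq> 0"
    using det_nonzero_if_mult_transpose[OF G GG] \<open>l \<noteq> 0\<close> by simp
  then have y: "is_ideal y" "ideal_mult y (det_ideal G (n - i)) = det_ideal G (n - (i - 1))"
    using dedekind_domain_smith_ideal[OF ded, of "n - i + 1" G] det_ideal_nonzero[OF G, of "n - i"]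
      \<open>1 \<le> i\<close> \<open>2 * i \<le> n\<close> unfolding y_def by (simp_all add: Suc_diff_le)
  have exponent: "n - 2 * (i - 1) = (n - 2 * i) + 2"
    using \<open>1 \<le> i\<close> \<open>2 * i \<le> n\<close> by simp
  have scale: "(*) (l ^ (n - 2 * (i - 1))) ` X = (*) (l ^ (n - 2 * i)) ` ((*) (l^2) ` X)" for X
    unfolding exponent image_image power_add by (simp only: mult.assoc[symmetric])
  have "(*) (l ^ (n - 2 * i)) ` ideal_mult y (det_ideal G i)
      = (*) (l ^ (n - 2 * i)) ` ideal_mult (det_ideal G i) y"
    by (simp only: ideal_mult_commute)
  also have "\<dots> = ideal_mult ((*) (l ^ (n - 2 * i)) ` det_ideal G i) y"
    by (rule ideal_mult_image_mult[OF is_ideal_det_ideal, symmetric])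
  also have "\<dots> = ideal_mult y ((*) (l ^ (n - 2 * i)) ` det_ideal G i)"
    by (rule ideal_mult_commute)
  also have "\<dots> = ideal_mult y (det_ideal G (n - i))"
    using det_ideal_complementary[OF G GG \<open>l \<noteq> 0\<close> \<open>2 * i \<le> n\<close>] by simp
  also have "\<dots> = (*) (l ^ (n - 2 * i)) ` ((*) (l^2) ` det_ideal G (i - 1))"
    unfolding y(2) scale[symmetric]
    by (rule det_ideal_complementary[OF G GG \<open>l \<noteq> 0\<close>]) (use \<open>2 * i \<le> n\<close> in simp)
  finally show ?thesis
    using \<open>l \<noteq> 0\<close> unfolding y_def by (simp add: inj_image_eq_iff)
qed

theorem lemma2p6:
  fixes G :: "'a::idom mat" and n :: nat and l :: 'a and i :: nat
  assumes "dedekind_domain TYPE('a)"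
    and "G \<in> carrier_mat n n"
    and "l \<noteq> 0"
    and "G * transpose_mat G = l^2 \<cdot>\<^sub>m 1\<^sub>m n"
    and "1 \<le> i" and "2 * i \<le> n"
  shows "ideal_mult (smith_ideal G i) (smith_ideal G (n - i + 1)) = principal_ideal (l^2)"
proof -
  note ded = assms(1) and G = assms(2) and GG = assms(4)
  let ?d = "smith_ideal G i" and ?d' = "smith_ideal G (n - i + 1)" and ?D = "det_ideal G (i - 1)"
  have "det G \<noteq> 0"
    using det_nonzero_if_mult_transpose[OF G GG] \<open>l \<noteq> 0\<close> by simp
  then have nz: "?D \<noteq> {0}"
    using det_ideal_nonzero[OF G] \<open>2 * i \<le> n\<close> by simp
  have "ideal_mult (ideal_mult ?d ?d') ?D = ideal_mult ?d' (ideal_mult ?d ?D)"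
    by (simp only: ideal_mult_commute[of ?d] ideal_mult_assoc)
  also have "\<dots> = ideal_mult ?d' (det_ideal G i)"
    unfolding dedekind_domain_smith_ideal(2)[OF ded \<open>1 \<le> i\<close> nz] ..
  also have "\<dots> = ideal_mult (principal_ideal (l^2)) ?D"
    unfolding ideal_mult_principal_ideal[OF is_ideal_det_ideal]
    by (rule smith_ideal_mult_det_ideal_complementary[OF ded G \<open>l \<noteq> 0\<close> GG \<open>1 \<le> i\<close> \<open>2 * i \<le> n\<close>])
  finally show ?thesis
    using dedekind_domain_invertible_ideal[OF ded is_ideal_det_ideal nz]
    by (rule invertible_ideal_cancel[OF _ is_ideal_ideal_mult is_ideal_principal_ideal, rotated])
qed

end
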